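(* Let $p\in\mathcal H(n,d)$ and suppose $p$ is affine in $x_n$, i.e. $p(x',x_n)=a(x')+x_n b(x')$ for some polynomials $a,b$ in $x'=(x_1,\dots,x_{n-1})$. Then $p\in\mathcal W$.
   Context: Write $s(x)=\sum_{j=1}^n x_j$. $\mathcal H(n,d)$ is the set of real polynomials in $x_1,\dots,x_n$ of total degree exactly $d$, with all coefficients nonnegative, such that $p(x)=1$ whenever $s(x)=1$. $\mathcal W$ is the set of polynomials obtainable from the constant polynomial $1$ by finitely many applications of operations of the form $g\mapsto g-u+s\,u$, where at each step $u$ is a polynomial such that both $u$ and $g-u$ have nonnegative coefficients. *)

theory Defs
  imports Complex_Main "HOL-Library.Poly_Mapping"
begin

text \<open>Real multivariate polynomials: finitely supported maps from monomials
(finitely supported exponent vectors, variable j = x_(j+1)) to coefficients.\<close>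

type_synonym mpoly = "(nat \<Rightarrow>\<^sub>0 nat) \<Rightarrow>\<^sub>0 real"

definition var :: "nat \<Rightarrow> mpoly" where
  "var j = Poly_Mapping.single (Poly_Mapping.single j 1) 1"

definition tdeg_mon :: "(nat \<Rightarrow>\<^sub>0 nat) \<Rightarrow> nat" where
  "tdeg_mon m = (\<Sum>i\<in>Poly_Mapping.keys m. Poly_Mapping.lookup m i)"

definition has_total_degree :: "mpoly \<Rightarrow> nat \<Rightarrow> bool" where
  "has_total_degree p d \<longleftrightarrow> Poly_Mapping.keys p \<noteq> {} \<and> Max (tdeg_mon ` Poly_Mapping.keys p) = d"

text \<open>polynomial only involves the variables x_1..x_n (indices 0..n-1)\<close>
definition in_vars :: "nat \<Rightarrow> mpoly \<Rightarrow> bool" where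
  "in_vars n p \<longleftrightarrow> (\<forall>m\<in>Poly_Mapping.keys p. Poly_Mapping.keys m \<subseteq> {..<n})"

definition nonneg_coeffs :: "mpoly \<Rightarrow> bool" where
  "nonneg_coeffs p \<longleftrightarrow> (\<forall>m. Poly_Mapping.lookup p m \<ge> 0)"

definition peval :: "mpoly \<Rightarrow> (nat \<Rightarrow> real) \<Rightarrow> real" where
  "peval p x = (\<Sum>m\<in>Poly_Mapping.keys p. Poly_Mapping.lookup p m * (\<Prod>i\<in>Poly_Mapping.keys m. x i ^ Poly_Mapping.lookup m i))"

definition spoly :: "nat \<Rightarrow> mpoly" where
  "spoly n = (\<Sum>j<n. var j)"

definition H :: "nat \<Rightarrow> nat \<Rightarrow> mpoly set" where
  "H n d = {p. in_vars n p \<and> has_total_degree p d \<and> nonneg_coeffs p \<and>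
               (\<forall>x. (\<Sum>j<n. x j) = 1 \<longrightarrow> peval p x = 1)}"

inductive_set W :: "nat \<Rightarrow> mpoly set" for n :: nat where
  W_one: "1 \<in> W n"
| W_step: "g \<in> W n \<Longrightarrow> nonneg_coeffs u \<Longrightarrow> nonneg_coeffs (g - u) \<Longrightarrow>
           g - u + spoly n * u \<in> W n"

end

theory Submission
  imports Defs "HOL-Computational_Algebra.Polynomial"
begin

(* Substituting x_n = 1 - (x_1 + ... + x_(n-1)) into
   p = 1 on the hyperplane s = 1 gives the polynomial identity p = 1 - b + s b, and b has nonnegative
   coefficients because they reappear in p as the coefficients of x_n b. Such a polynomial is reached
   from 1 inside W by adding the homogeneous components u of b in order of increasing degree: in the
   step g |-> g - u + s u, the coefficients of g - u in degrees up to deg u are those of p, and in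
   higher degrees only s times the part of b already added contributes. *)

definition eval_mon :: "(nat \<Rightarrow>\<^sub>0 nat) \<Rightarrow> (nat \<Rightarrow> real) \<Rightarrow> real" where
  "eval_mon m x = (\<Prod>i\<in>Poly_Mapping.keys m. x i ^ Poly_Mapping.lookup m i)"

lemma eval_mon_superset:
  assumes "finite T" "Poly_Mapping.keys m \<subseteq> T"
  shows "eval_mon m x = (\<Prod>i\<in>T. x i ^ Poly_Mapping.lookup m i)"
  unfolding eval_mon_def
  by (rule prod.mono_neutral_left) (use assms in \<open>auto simp: in_keys_iff\<close>)

lemma eval_mon_add: "eval_mon (m + r) x = eval_mon m x * eval_mon r x"
proof -
  let ?T = "Poly_Mapping.keys m \<union> Poly_Mapping.keys r"
  have "eval_mon (m + r) x = (\<Prod>i\<in>?T. x i ^ Poly_Mapping.lookup (m + r) i)"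
    by (rule eval_mon_superset) (simp_all add: keys_add)
  also have "\<dots> = (\<Prod>i\<in>?T. x i ^ Poly_Mapping.lookup m i) * (\<Prod>i\<in>?T. x i ^ Poly_Mapping.lookup r i)"
    by (simp add: lookup_add power_add prod.distrib)
  also have "\<dots> = eval_mon m x * eval_mon r x"
    by (simp add: eval_mon_superset[of ?T])
  finally show ?thesis .
qed

lemma peval_eq_sum_eval_mon:
  "peval p x = (\<Sum>m\<in>Poly_Mapping.keys p. Poly_Mapping.lookup p m * eval_mon m x)"
  by (simp add: peval_def eval_mon_def)

lemma peval_add: "peval (p + q) x = peval p x + peval q x"
  unfolding peval_eq_sum_eval_mon
  by (rule setsum_keys_plus_distrib) (simp_all add: distrib_right)

lemma peval_diff: "peval (p - q) x = peval p x - peval q x"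
  using peval_add[of "p - q" q x] by simp

lemma peval_0 [simp]: "peval 0 x = 0"
  by (simp add: peval_def)

lemma peval_1 [simp]: "peval 1 x = 1"
  by (simp add: peval_eq_sum_eval_mon eval_mon_def)

lemma peval_sum: "peval (\<Sum>a\<in>A. f a) x = (\<Sum>a\<in>A. peval (f a) x)"
  by (induction A rule: infinite_finite_induct) (simp_all add: peval_add)

lemma lookup_single_mult_add:
  fixes q :: mpoly
  shows "Poly_Mapping.lookup (Poly_Mapping.single e c * q) (e + r) = c * Poly_Mapping.lookup q r"
  by (simp add: lookup_mult lookup_single when_mult add_left_cancel)

lemma keys_single_mult:
  fixes q :: mpoly
  shows "Poly_Mapping.keys (Poly_Mapping.single e c * q) \<subseteq> (+) e ` Poly_Mapping.keys q"
  using keys_mult[of "Poly_Mapping.single e c" q] by (cases "c = 0") auto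

lemma lookup_single_mult:
  fixes q :: mpoly
  shows "Poly_Mapping.lookup (Poly_Mapping.single e c * q) m =
    (if \<exists>r. m = e + r then c * Poly_Mapping.lookup q (m - e) else 0)"
proof (cases "\<exists>r. m = e + r")
  case True
  then show ?thesis by (auto simp: lookup_single_mult_add)
next
  case False
  then have "m \<notin> Poly_Mapping.keys (Poly_Mapping.single e c * q)"
    using keys_single_mult by blast
  with False show ?thesis by (simp add: in_keys_iff)
qed

lemma peval_single_mult:
  "peval (Poly_Mapping.single e c * q) x = c * eval_mon e x * peval q x"
proof -
  have "peval (Poly_Mapping.single e c * q) x
      = (\<Sum>m\<in>(+) e ` Poly_Mapping.keys q. Poly_Mapping.lookup (Poly_Mapping.single e c * q) m * eval_mon m x)"
    unfolding peval_eq_sum_eval_mon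
    by (rule sum.mono_neutral_left) (use keys_single_mult in \<open>auto simp: in_keys_iff\<close>)
  also have "\<dots> = (\<Sum>r\<in>Poly_Mapping.keys q. c * Poly_Mapping.lookup q r * (eval_mon e x * eval_mon r x))"
    by (simp add: sum.reindex lookup_single_mult_add eval_mon_add)
  also have "\<dots> = c * eval_mon e x * peval q x"
    by (simp add: peval_eq_sum_eval_mon sum_distrib_left mult_ac)
  finally show ?thesis .
qed

lemma peval_var_mult: "peval (var j * q) x = x j * peval q x"
  by (simp add: var_def peval_single_mult eval_mon_def)

lemma peval_spoly_mult: "peval (spoly k * q) x = (\<Sum>j<k. x j) * peval q x"
  by (simp add: spoly_def sum_distrib_right peval_sum peval_var_mult)

lemma lookup_var_mult:
  "Poly_Mapping.lookup (var j * q) m =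
    (if \<exists>r. m = Poly_Mapping.single j 1 + r then Poly_Mapping.lookup q (m - Poly_Mapping.single j 1) else 0)"
  by (simp add: var_def lookup_single_mult)

lemma nonneg_coeffs_var_mult: "nonneg_coeffs q \<Longrightarrow> nonneg_coeffs (var j * q)"
  by (simp add: nonneg_coeffs_def lookup_var_mult)

lemma nonneg_coeffs_spoly_mult: "nonneg_coeffs q \<Longrightarrow> nonneg_coeffs (spoly k * q)"
  using nonneg_coeffs_var_mult unfolding nonneg_coeffs_def
  by (simp add: spoly_def sum_distrib_right lookup_sum sum_nonneg)

lemma base_expansion_less:
  fixes f :: "nat \<Rightarrow> nat"
  assumes "\<And>i. i < L \<Longrightarrow> f i < N"
  shows "(\<Sum>i<L. f i * N ^ i) < N ^ L"
  using assms
proof (induction L)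
  case 0
  then show ?case by simp
next
  case (Suc L)
  have "(\<Sum>i<Suc L. f i * N ^ i) < N ^ L + f L * N ^ L"
    using Suc by simp
  also have "\<dots> = Suc (f L) * N ^ L"
    by simp
  also have "\<dots> \<le> N * N ^ L"
    using Suc.prems[of L] by (intro mult_le_mono1) simp
  finally show ?case by simp
qed

lemma base_expansion_inj:
  fixes f g :: "nat \<Rightarrow> nat"
  assumes "\<And>i. i < L \<Longrightarrow> f i < N" "\<And>i. i < L \<Longrightarrow> g i < N"
    and "(\<Sum>i<L. f i * N ^ i) = (\<Sum>i<L. g i * N ^ i)" and "i < L"
  shows "f i = g i"
  using assms
proof (induction L)
  case 0
  then show ?case by simp
next
  case (Suc L)
  let ?A = "\<Sum>i<L. f i * N ^ i" and ?B = "\<Sum>i<L. g i * N ^ i"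
  have A: "?A < N ^ L" and B: "?B < N ^ L"
    using Suc.prems by (simp_all add: base_expansion_less)
  have eq: "?A + f L * N ^ L = ?B + g L * N ^ L"
    using Suc.prems(3) by simp
  have "N ^ L \<noteq> 0"
    using A by linarith
  then have "f L = (?A + f L * N ^ L) div N ^ L" "g L = (?B + g L * N ^ L) div N ^ L"
    using A B by simp_all
  then have "f L = g L"
    using eq by simp
  with eq Suc show ?case by (auto simp: less_Suc_eq)
qed

lemma eval_mon_kronecker:
  assumes "Poly_Mapping.keys m \<subseteq> {..<L}"
  shows "eval_mon m (\<lambda>i. t ^ N ^ i) = t ^ (\<Sum>i<L. Poly_Mapping.lookup m i * N ^ i)"
proof -
  have "eval_mon m (\<lambda>i. t ^ N ^ i) = (\<Prod>i<L. (t ^ N ^ i) ^ Poly_Mapping.lookup m i)"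
    using assms by (simp add: eval_mon_superset)
  also have "\<dots> = (\<Prod>i<L. t ^ (Poly_Mapping.lookup m i * N ^ i))"
    by (simp add: power_mult[symmetric] mult.commute)
  finally show ?thesis
    by (simp add: power_sum)
qed

(* Kronecker substitution: x_i := t ^ N ^ i, with N above every exponent occurring in q, sends
   distinct monomials of q to distinct powers of t, so q = 0 follows from the univariate case. *)
lemma mpoly_eq_0_if_peval_eq_0:
  assumes "\<And>x. peval q x = 0"
  shows "q = 0"
proof (rule ccontr)
  assume "q \<noteq> 0"
  define K where "K = Poly_Mapping.keys q"
  obtain L where L: "\<And>m. m \<in> K \<Longrightarrow> Poly_Mapping.keys m \<subseteq> {..<L}"
    using finite_nat_bounded[of "\<Union>m\<in>K. Poly_Mapping.keys m"] by (auto simp: K_def)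
  have "finite (insert 0 (\<Union>m\<in>K. Poly_Mapping.range m))"
    by (simp add: K_def)
  then obtain N where N0: "insert 0 (\<Union>m\<in>K. Poly_Mapping.range m) \<subseteq> {..<N}"
    using finite_nat_bounded by blast
  have N: "Poly_Mapping.lookup m i < N" if "m \<in> K" for m i
    using that N0 in_keys_lookup_in_range[of i m] not_in_keys_iff_lookup_eq_zero[of i m] by force
  define enc where "enc m = (\<Sum>i<L. Poly_Mapping.lookup m i * N ^ i)" for m
  have "inj_on enc K"
  proof (rule inj_onI, rule poly_mapping_eqI)
    fix m m' i
    assume mm': "m \<in> K" "m' \<in> K" "enc m = enc m'"
    show "Poly_Mapping.lookup m i = Poly_Mapping.lookup m' i"
    proof (cases "i < L")
      case True
      then show ?thesis
        using base_expansion_inj[of L "Poly_Mapping.lookup m" N "Poly_Mapping.lookup m'" i] N mm'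
        by (simp add: enc_def)
    next
      case False
      then have "i \<notin> Poly_Mapping.keys m" "i \<notin> Poly_Mapping.keys m'"
        using L mm' by auto
      then show ?thesis
        by (simp add: in_keys_iff)
    qed
  qed
  define P where "P = (\<Sum>m\<in>K. monom (Poly_Mapping.lookup q m) (enc m))"
  have "poly P t = peval q (\<lambda>i. t ^ N ^ i)" for t
    unfolding P_def peval_eq_sum_eval_mon K_def[symmetric] poly_sum
    by (rule sum.cong) (simp_all add: poly_monom eval_mon_kronecker[OF L] enc_def)
  then have "P = 0"
    using assms poly_all_0_iff_0 by auto
  obtain m0 where m0: "m0 \<in> K"
    using \<open>q \<noteq> 0\<close> by (metis K_def ex_in_conv keys_eq_empty)
  have "coeff P (enc m0) = (\<Sum>m\<in>K. if m = m0 then Poly_Mapping.lookup q m else 0)"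
    unfolding P_def coeff_sum coeff_monom
    using \<open>inj_on enc K\<close> m0 by (intro sum.cong) (auto dest: inj_onD)
  also have "\<dots> = Poly_Mapping.lookup q m0"
    using m0 by (simp add: K_def)
  finally show False
    using \<open>P = 0\<close> m0 by (simp add: K_def in_keys_iff)
qed

lemma mpoly_eqI_peval:
  assumes "\<And>x. peval p x = peval q x"
  shows "p = q"
  using mpoly_eq_0_if_peval_eq_0[of "p - q"] assms by (simp add: peval_diff)

lemma tdeg_mon_add: "tdeg_mon (m + r) = tdeg_mon m + tdeg_mon r"
  unfolding tdeg_mon_def by (rule setsum_keys_plus_distrib) simp_all

lemma tdeg_mon_0 [simp]: "tdeg_mon 0 = 0"
  by (simp add: tdeg_mon_def)

lemma tdeg_mon_single [simp]: "tdeg_mon (Poly_Mapping.single j k) = k"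
  by (simp add: tdeg_mon_def)

definition deg_less_part :: "nat \<Rightarrow> mpoly \<Rightarrow> mpoly" where
  "deg_less_part t p = Poly_Mapping.mapp (\<lambda>m c. c when tdeg_mon m < t) p"

lemma lookup_deg_less_part:
  "Poly_Mapping.lookup (deg_less_part t p) m = (if tdeg_mon m < t then Poly_Mapping.lookup p m else 0)"
  by (simp add: deg_less_part_def lookup_mapp when_def in_keys_iff)

lemma nonneg_coeffs_deg_less_part: "nonneg_coeffs p \<Longrightarrow> nonneg_coeffs (deg_less_part t p)"
  by (simp add: nonneg_coeffs_def lookup_deg_less_part)

lemma lookup_spoly_mult_cong:
  assumes "\<And>r. tdeg_mon r < tdeg_mon m \<Longrightarrow> Poly_Mapping.lookup q r = Poly_Mapping.lookup q' r"
  shows "Poly_Mapping.lookup (spoly n * q) m = Poly_Mapping.lookup (spoly n * q') m"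
  unfolding spoly_def sum_distrib_right lookup_sum
  by (rule sum.cong) (auto simp: lookup_var_mult tdeg_mon_add intro!: assms)

lemma nonneg_coeffs_deg_less_part_step:
  assumes "nonneg_coeffs b" and "nonneg_coeffs (1 - b + spoly n * b)"
  shows "nonneg_coeffs (1 - deg_less_part (Suc t) b + spoly n * deg_less_part t b)"
  unfolding nonneg_coeffs_def
proof
  fix m
  let ?B = "deg_less_part t b"
  have lookup_eq: "Poly_Mapping.lookup (1 - deg_less_part (Suc t) b + spoly n * ?B) m
      = Poly_Mapping.lookup 1 m - Poly_Mapping.lookup (deg_less_part (Suc t) b) m
        + Poly_Mapping.lookup (spoly n * ?B) m"
    by (simp add: lookup_add lookup_minus)
  show "0 \<le> Poly_Mapping.lookup (1 - deg_less_part (Suc t) b + spoly n * ?B) m"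
  proof (cases "tdeg_mon m \<le> t")
    case True
    then have "Poly_Mapping.lookup (spoly n * ?B) m = Poly_Mapping.lookup (spoly n * b) m"
      by (intro lookup_spoly_mult_cong) (simp add: lookup_deg_less_part)
    with True have "Poly_Mapping.lookup (1 - deg_less_part (Suc t) b + spoly n * ?B) m
        = Poly_Mapping.lookup (1 - b + spoly n * b) m"
      by (simp add: lookup_eq lookup_add lookup_minus lookup_deg_less_part)
    then show ?thesis
      using assms(2) by (simp add: nonneg_coeffs_def)
  next
    case False
    then have "m \<noteq> 0"
      by auto
    with False have "Poly_Mapping.lookup (1 - deg_less_part (Suc t) b + spoly n * ?B) m
        = Poly_Mapping.lookup (spoly n * ?B) m"
      by (simp add: lookup_eq lookup_one lookup_deg_less_part)
    then show ?thesis
      using nonneg_coeffs_spoly_mult[OF nonneg_coeffs_deg_less_part[OF assms(1)]]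
      by (simp add: nonneg_coeffs_def)
  qed
qed

lemma one_minus_plus_spoly_mult_in_W:
  assumes "nonneg_coeffs b" and "nonneg_coeffs (1 - b + spoly n * b)"
  shows "1 - b + spoly n * b \<in> W n"
proof -
  define g where "g t = 1 - deg_less_part t b + spoly n * deg_less_part t b" for t
  have "g t \<in> W n" for t
  proof (induction t)
    case 0
    have "deg_less_part 0 b = 0"
      by (rule poly_mapping_eqI) (simp add: lookup_deg_less_part)
    then show ?case
      by (simp add: g_def W_one)
  next
    case (Suc t)
    define u where "u = deg_less_part (Suc t) b - deg_less_part t b"
    have u: "nonneg_coeffs u"
      using assms(1) by (simp add: nonneg_coeffs_def u_def lookup_minus lookup_deg_less_part)
    have "g t - u = 1 - deg_less_part (Suc t) b + spoly n * deg_less_part t b"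
      by (simp add: g_def u_def)
    then have gu: "nonneg_coeffs (g t - u)"
      by (simp only: nonneg_coeffs_deg_less_part_step[OF assms])
    have "g t - u + spoly n * u \<in> W n"
      using Suc u gu by (rule W_step)
    moreover have "g t - u + spoly n * u = g (Suc t)"
      by (simp add: g_def u_def algebra_simps)
    ultimately show ?case
      by simp
  qed
  obtain T where "tdeg_mon ` Poly_Mapping.keys b \<subseteq> {..<T}"
    using finite_nat_bounded[of "tdeg_mon ` Poly_Mapping.keys b"] by auto
  then have "deg_less_part T b = b"
    by (intro poly_mapping_eqI) (force simp: lookup_deg_less_part in_keys_iff)
  with \<open>g T \<in> W n\<close> show ?thesis
    by (simp add: g_def)
qed

lemma peval_cong_in_vars:
  assumes "in_vars k c" and "\<And>i. i < k \<Longrightarrow> x i = y i"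
  shows "peval c x = peval c y"
  unfolding peval_def
proof (intro sum.cong prod.cong refl arg_cong2[where f = "(*)"])
  fix m i
  assume "m \<in> Poly_Mapping.keys c" "i \<in> Poly_Mapping.keys m"
  with assms(1) have "i < k"
    by (auto simp: in_vars_def)
  then show "x i ^ Poly_Mapping.lookup m i = y i ^ Poly_Mapping.lookup m i"
    by (simp add: assms(2))
qed

lemma affine_eq_one_minus_plus_spoly_mult:
  assumes "in_vars k a" and "in_vars k b"
    and "\<And>x. (\<Sum>j<Suc k. x j) = 1 \<Longrightarrow> peval (a + var k * b) x = 1"
  shows "a + var k * b = 1 - b + spoly (Suc k) * b"
proof (rule mpoly_eqI_peval)
  fix x :: "nat \<Rightarrow> real"
  define y where "y = x(k := 1 - (\<Sum>j<k. x j))"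
  have y_less: "y i = x i" if "i < k" for i
    using that by (simp add: y_def)
  have y_k: "y k = 1 - (\<Sum>j<k. x j)"
    by (simp add: y_def)
  have "(\<Sum>j<Suc k. y j) = 1"
    using y_less y_k by simp
  then have "peval a y + y k * peval b y = 1"
    using assms(3) by (simp only: peval_add peval_var_mult)
  moreover have "peval a y = peval a x" "peval b y = peval b x"
    by (rule peval_cong_in_vars[OF assms(1)] peval_cong_in_vars[OF assms(2)], simp add: y_less)+
  ultimately have "peval a x + peval b x - (\<Sum>j<k. x j) * peval b x = 1"
    by (simp add: y_k algebra_simps)
  moreover have "peval (a + var k * b) x = peval a x + x k * peval b x"
    by (simp add: peval_add peval_var_mult)
  moreover have "peval (1 - b + spoly (Suc k) * b) x
      = 1 - peval b x + (\<Sum>j<k. x j) * peval b x + x k * peval b x"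
    by (simp add: peval_add peval_diff peval_spoly_mult distrib_right)
  ultimately show "peval (a + var k * b) x = peval (1 - b + spoly (Suc k) * b) x"
    by linarith
qed

lemma lookup_var_mult_single_add:
  "Poly_Mapping.lookup (var k * b) (Poly_Mapping.single k 1 + r) = Poly_Mapping.lookup b r"
  by (simp add: var_def lookup_single_mult_add)

lemma lookup_single_add_eq_0_if_in_vars:
  assumes "in_vars k a"
  shows "Poly_Mapping.lookup a (Poly_Mapping.single k 1 + r) = 0"
proof -
  have "k \<in> Poly_Mapping.keys (Poly_Mapping.single k 1 + r)"
    by (simp add: in_keys_iff lookup_add)
  then have "\<not> Poly_Mapping.keys (Poly_Mapping.single k 1 + r) \<subseteq> {..<k}"
    by auto
  with assms have "Poly_Mapping.single k 1 + r \<notin> Poly_Mapping.keys a"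
    unfolding in_vars_def by auto
  then show ?thesis
    by (simp add: in_keys_iff)
qed

theorem lemma6:
  fixes n d :: nat and p :: mpoly
  assumes "n \<ge> 1"
    and "p \<in> H n d"
    and "\<exists>a b. in_vars (n - 1) a \<and> in_vars (n - 1) b \<and> p = a + var (n - 1) * b"
  shows "p \<in> W n"
proof -
  obtain k where n: "n = Suc k"
    using assms(1) by (cases n) auto
  obtain a b where a: "in_vars k a" and b: "in_vars k b" and p: "p = a + var k * b"
    using assms(3) by (auto simp: n)
  have p_nonneg: "nonneg_coeffs p" and p_simplex: "\<And>x. (\<Sum>j<n. x j) = 1 \<Longrightarrow> peval p x = 1"
    using assms(2) by (auto simp: H_def)
  have "Poly_Mapping.lookup b r = Poly_Mapping.lookup p (Poly_Mapping.single k 1 + r)" for r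
    unfolding p lookup_add lookup_var_mult_single_add lookup_single_add_eq_0_if_in_vars[OF a] by simp
  with p_nonneg have "nonneg_coeffs b"
    by (simp add: nonneg_coeffs_def)
  moreover have "p = 1 - b + spoly n * b"
    using affine_eq_one_minus_plus_spoly_mult[OF a b] p_simplex by (simp add: p n)
  ultimately show ?thesis
    using p_nonneg one_minus_plus_spoly_mult_in_W by simp
qed

end
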